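(* Fix $L\in\mathbb Z$ and work on $Y_L=\mathbb R\times(0,2^L]\times\mathbb R$ with the objects described in the context. The function $\mathcal C(A)=\mathcal M(\mathcal N(\mathcal Q(A)))$, $A\subseteq Y_L$, with $\mathcal E=\mathcal D_L$, is a $\mu$-covering function with parameter $\Phi$ for every $\Phi\ge2$.
   Context: Dyadic intervals $I(m,l)=(2^lm,2^l(m+1)]$; tiles $H(m,l,n)=I(m,l)\times(2^{l-1},2^l]\times I(n,-l)$. $\mathcal D_L$ = strips $D(m,l)=I(m,l)\times(0,2^l]\times\mathbb R$ with $l\le L$, $\sigma(D(m,l))=2^l$. $\mathcal T_L$ = trees $T(m,l,n)=\bigcup_{l'\le l}\bigcup_{m':\,I(m',l')\subseteq I(m,l)}H(m',l',N(n,l'))$ with $l\le L$ ($N(n,l')$ the integer with $I(n,-l)\subseteq I(N(n,l'),-l')$), $\tau(T(m,l,n))=2^l$. Outer measures on $Y_L$: $\mu(A)=\inf\{\sum_{S\in\mathcal S'}\sigma(S):\mathcal S'\subseteq\mathcal D_L,A\subseteq\bigcup\mathcal S'\}$, $\nu$ likewise from $(\mathcal T_L,\tau)$. $\pi$ = projection onto first coordinate, $|\cdot|$ Lebesgue measure. For $E\in\mathcal D_L$, $E_+=\{(x,s,\xi)\in E:s>\sigma(E)/2\}$. $\mathcal Q(A)=\{E\in\mathcal D_L:E_+\cap A\ne\varnothing\}$. For $\mathcal D_1\subseteq\mathcal D_L$: $\mathcal N(\mathcal D_1)=\{E\in\mathcal D_L:|\pi(E)\cap\pi(\bigcup\mathcal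 D_1)|\ge|\pi(E)|/2\}$, and $\mathcal M(\mathcal D_1)$ is the subcollection of elements of $\mathcal D_1$ maximal with respect to inclusion. A $\mu$-covering function with parameter $\Phi$: a map $\mathcal C$ assigning to each $A$ a subcollection of pairwise disjoint elements of $\mathcal E$ such that $\mathbf B_{\mathcal C}(A)=\bigcup_{E\in\mathcal C(A)}E$ satisfies $A\subseteq\mathbf B_{\mathcal C}(A)$, $\mu(\mathbf B_{\mathcal C}(A))\le\Phi\mu(A)$, and $A_1\subseteq A_2\Rightarrow\mathbf B_{\mathcal C}(A_1)\subseteq\mathbf B_{\mathcal C}(A_2)$. *)

theory Defs
  imports "HOL-Analysis.Analysis"
begin

text \<open>Points (x, s, xi) of the upper half space.\<close>
type_synonym point = "real \<times> real \<times> real"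

definition dyadic_interval :: "int \<Rightarrow> int \<Rightarrow> real set" where
  "dyadic_interval m l =
     {2 powr of_int l * of_int m <.. 2 powr of_int l * (of_int m + 1)}"

definition strip :: "int \<Rightarrow> int \<Rightarrow> point set" where
  "strip m l = dyadic_interval m l \<times> {0<..2 powr of_int l} \<times> (UNIV :: real set)"

definition strips :: "int \<Rightarrow> point set set" where
  "strips L = {strip m l | m l. l \<le> L}"

definition sigma :: "point set \<Rightarrow> real" where
  "sigma E = (THE s. \<exists>m l. E = strip m l \<and> s = 2 powr of_int l)"

definition Y :: "int \<Rightarrow> point set" where
  "Y L = (UNIV :: real set) \<times> {0<..2 powr of_int L} \<times> (UNIV :: real set)"

definition sum_sigma :: "point set set \<Rightarrow> ennreal" where
  "sum_sigma S = (SUP F\<in>{F. finite F \<and> F \<subseteq> S}. \<Sum>E\<in>F. ennreal (sigma E))"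

definition mu :: "int \<Rightarrow> point set \<Rightarrow> ennreal" where
  "mu L A = (INF S\<in>{S. S \<subseteq> strips L \<and> A \<subseteq> \<Union>S}. sum_sigma S)"

definition upper_half :: "point set \<Rightarrow> point set" where
  "upper_half E = {p \<in> E. fst (snd p) > sigma E / 2}"

definition Qcal :: "int \<Rightarrow> point set \<Rightarrow> point set set" where
  "Qcal L A = {E \<in> strips L. upper_half E \<inter> A \<noteq> {}}"

definition Ncal :: "int \<Rightarrow> point set set \<Rightarrow> point set set" where
  "Ncal L D1 = {E \<in> strips L.
      emeasure lborel (fst ` E \<inter> fst ` (\<Union>D1)) \<ge> emeasure lborel (fst ` E) / 2}"

definition Mcal :: "point set set \<Rightarrow> point set set" where
  "Mcal D1 = {E \<in> D1. \<not> (\<exists>E'\<in>D1. E \<subset> E')}"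

definition covering_function :: "int \<Rightarrow> (point set \<Rightarrow> point set set) \<Rightarrow> real \<Rightarrow> bool" where
  "covering_function L C \<Phi> \<longleftrightarrow>
     (\<forall>A. A \<subseteq> Y L \<longrightarrow>
        C A \<subseteq> strips L \<and> pairwise disjnt (C A) \<and> A \<subseteq> \<Union>(C A) \<and>
        mu L (\<Union>(C A)) \<le> ennreal \<Phi> * mu L A) \<and>
     (\<forall>A1 A2. A1 \<subseteq> A2 \<longrightarrow> A2 \<subseteq> Y L \<longrightarrow> \<Union>(C A1) \<subseteq> \<Union>(C A2))"

end

theory Submission
  imports Defs
begin

(* Dyadic strips are nested or disjoint, and the projection of a strip E to the first
   coordinate is a dyadic interval of length sigma E.  Hence the maximal elements of a family
   of strips have pairwise disjoint projections and cover the same set as the whole family;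
   together with the fact that every point of Y_L lies in the upper half of some strip and
   the monotonicity of Q and N this settles everything except the measure bound.

   For the measure bound let S be any cover of A by strips.  A strip of S meeting the upper
   half of a strip E of Q(A) has at least the level of E and therefore contains E, so
   pi(Union Q(A)) is contained in pi(Union S) and |pi(Union Q(A))| <= mu(A).  Every maximal
   strip of N(Q(A)) has at least half of its projection inside pi(Union Q(A)), and these
   projections are disjoint, so the sum of sigma over C(A) is at most 2 |pi(Union Q(A))|. *)

lemma ennreal_le_double_if_half_le:
  fixes x y :: ennreal
  assumes "x / 2 \<le> y"
  shows "x \<le> 2 * y"
proof -
  have "x = 2 * (x / 2)"
    by (simp add: ennreal_times_divide mult.commute[of 2] mult_divide_eq_ennreal)
  also have "\<dots> \<le> 2 * y"
    using assms by (rule mult_left_mono) simp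
  finally show ?thesis .
qed

lemma emeasure_UN_le_SUP:
  assumes "countable I" and X: "\<And>i. i \<in> I \<Longrightarrow> X i \<in> sets M"
  shows "emeasure M (\<Union>i\<in>I. X i) \<le> (SUP F\<in>{F. finite F \<and> F \<subseteq> I}. \<Sum>i\<in>F. emeasure M (X i))"
proof (cases "I = {}")
  case False
  define f where "f = from_nat_into I"
  have "range f = I" unfolding f_def using range_from_nat_into[OF False \<open>countable I\<close>] .
  define Y where "Y n = (\<Union>i\<in>f ` {..<n}. X i)" for n
  have f_sub: "f ` {..<n} \<subseteq> I" for n using \<open>range f = I\<close> by blast
  have "(\<Union>i\<in>I. X i) = (\<Union>n. Y n)"
    unfolding Y_def using \<open>range f = I\<close> by auto
  also have "emeasure M \<dots> = (SUP n. emeasure M (Y n))"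
    using f_sub X
    by (intro SUP_emeasure_incseq[symmetric] incseq_SucI) (auto simp: Y_def lessThan_Suc)
  also have "\<dots> \<le> (SUP F\<in>{F. finite F \<and> F \<subseteq> I}. \<Sum>i\<in>F. emeasure M (X i))"
  proof (rule SUP_least)
    fix n
    have "emeasure M (Y n) \<le> (\<Sum>i\<in>f ` {..<n}. emeasure M (X i))"
      unfolding Y_def using f_sub X by (intro emeasure_subadditive_finite) auto
    also have "\<dots> \<le> (SUP F\<in>{F. finite F \<and> F \<subseteq> I}. \<Sum>i\<in>F. emeasure M (X i))"
      using f_sub by (intro SUP_upper) auto
    finally show "emeasure M (Y n) \<le> \<dots>" .
  qed
  finally show ?thesis .
qed simp

lemma mem_dyadic_interval:
  "x \<in> dyadic_interval m l \<longleftrightarrow>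
     of_int m < x / 2 powr of_int l \<and> x / 2 powr of_int l \<le> of_int m + 1"
  by (simp add: dyadic_interval_def pos_less_divide_eq pos_divide_le_eq mult.commute)

lemma two_powr_of_int_eq_mult:
  fixes l l' :: int
  assumes "l \<le> l'"
  shows "2 powr (of_int l'::real) = 2 powr of_int l * of_int ((2::int) ^ nat (l' - l))"
  using assms by (simp add: powr_add [symmetric] powr_realpow [symmetric])

lemma dyadic_interval_subset:
  assumes "l \<le> l'" "x \<in> dyadic_interval m l" "x \<in> dyadic_interval m' l'"
  shows "dyadic_interval m l \<subseteq> dyadic_interval m' l'"
proof -
  define a where "a = 2 powr (of_int l::real)"
  define q where "q = (2::int) ^ nat (l' - l)"
  have "a > 0" "q > 0" by (simp_all add: a_def q_def)
  have fine: "y \<in> dyadic_interval m l \<longleftrightarrow> of_int m < y / a \<and> y / a \<le> of_int m + 1" for y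
    by (simp add: mem_dyadic_interval a_def)
  have coarse: "y \<in> dyadic_interval m' l' \<longleftrightarrow>
      of_int (q * m') < y / a \<and> y / a \<le> of_int (q * (m' + 1))" for y
    using \<open>a > 0\<close> \<open>q > 0\<close>
    by (simp add: mem_dyadic_interval two_powr_of_int_eq_mult[OF assms(1)] a_def q_def field_simps)
  have "of_int (q * m') < (of_int (m + 1) :: real)" "of_int m < (of_int (q * (m' + 1)) :: real)"
    using assms(2,3) unfolding fine coarse by simp_all
  then have "q * m' \<le> m" "m + 1 \<le> q * (m' + 1)"
    unfolding of_int_less_iff by linarith+
  then have bounds: "real_of_int (q * m') \<le> of_int m" "of_int m + 1 \<le> real_of_int (q * (m' + 1))"
    by linarith+
  show ?thesis
  proof
    fix y assume "y \<in> dyadic_interval m l"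
    with bounds show "y \<in> dyadic_interval m' l'"
      unfolding fine coarse by linarith
  qed
qed

lemma emeasure_dyadic_interval:
  "emeasure lborel (dyadic_interval m l) = ennreal (2 powr of_int l)"
  by (simp add: dyadic_interval_def algebra_simps)

lemma right_endpoint_in_dyadic_interval:
  "2 powr of_int l * (of_int m + 1) \<in> dyadic_interval m l"
  by (simp add: dyadic_interval_def)

lemma mem_strip:
  "p \<in> strip m l \<longleftrightarrow>
     fst p \<in> dyadic_interval m l \<and> 0 < fst (snd p) \<and> fst (snd p) \<le> 2 powr of_int l"
  by (cases p) (auto simp: strip_def)

lemma fst_strip: "fst ` strip m l = dyadic_interval m l"
  by (simp add: strip_def)

lemma strip_subset_imp_le:
  assumes "strip m l \<subseteq> strip m' l'"
  shows "l \<le> l'"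
proof -
  have "(2 powr of_int l * (of_int m + 1), 2 powr of_int l, 0) \<in> strip m l"
    by (simp add: mem_strip right_endpoint_in_dyadic_interval)
  then have "(2 powr of_int l * (of_int m + 1), 2 powr of_int l, 0) \<in> strip m' l'"
    using assms by blast
  then have "(2::real) powr of_int l \<le> 2 powr of_int l'"
    by (simp add: mem_strip)
  then show ?thesis by simp
qed

lemma strip_eq_imp_level_eq: "strip m l = strip m' l' \<Longrightarrow> l = l'"
  by (metis antisym order_refl strip_subset_imp_le)

lemma strip_subset_strip:
  assumes "l \<le> l'" "x \<in> dyadic_interval m l" "x \<in> dyadic_interval m' l'"
  shows "strip m l \<subseteq> strip m' l'"
  using dyadic_interval_subset[OF assms] assms(1) by (auto simp: strip_def order_trans)

lemma strip_psubset_imp_less: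
  assumes "strip m l \<subset> strip m' l'"
  shows "l < l'"
proof (rule ccontr)
  assume "\<not> l < l'"
  moreover have "l \<le> l'" using assms by (auto intro: strip_subset_imp_le)
  ultimately have "l' \<le> l" by simp
  moreover have "2 powr of_int l * (of_int m + 1) \<in> dyadic_interval m' l'"
    using assms right_endpoint_in_dyadic_interval fst_strip by blast
  ultimately have "strip m' l' \<subseteq> strip m l"
    using right_endpoint_in_dyadic_interval by (rule strip_subset_strip)
  with assms show False by blast
qed

lemma sigma_strip: "sigma (strip m l) = 2 powr of_int l"
  unfolding sigma_def
  by (rule the_equality) (auto dest: strip_eq_imp_level_eq)

lemma strip_in_strips_iff: "strip m l \<in> strips L \<longleftrightarrow> l \<le> L"
  unfolding strips_def by (auto dest: strip_eq_imp_level_eq)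

lemma stripsE:
  assumes "E \<in> strips L"
  obtains m l where "E = strip m l" "l \<le> L"
  using assms unfolding strips_def by blast

lemma strips_comparable:
  assumes "E \<in> strips L" "E' \<in> strips L'" "fst ` E \<inter> fst ` E' \<noteq> {}"
  shows "E \<subseteq> E' \<or> E' \<subseteq> E"
proof -
  obtain m l m' l' where E: "E = strip m l" "E' = strip m' l'"
    using assms(1,2) by (blast elim: stripsE)
  obtain x where "x \<in> dyadic_interval m l" "x \<in> dyadic_interval m' l'"
    using assms(3) unfolding E fst_strip by blast
  then show ?thesis
    unfolding E by (metis linear strip_subset_strip)
qed

lemma Mcal_subset: "Mcal D \<subseteq> D"
  unfolding Mcal_def by blast

lemma exists_Mcal_superset:
  assumes D: "D \<subseteq> strips L" and "E \<in> D"
  obtains E' where "E' \<in> Mcal D" "E \<subseteq> E'"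
proof -
  obtain m l where E: "E = strip m l" using assms by (blast elim: stripsE)
  define K where "K = {l'. \<exists>m'. strip m' l' \<in> D \<and> E \<subseteq> strip m' l'}"
  have "K \<subseteq> {l..L}"
  proof
    fix l' assume "l' \<in> K"
    then obtain m' where "strip m' l' \<in> D" "strip m l \<subseteq> strip m' l'"
      unfolding K_def E by blast
    then show "l' \<in> {l..L}"
      using D strip_subset_imp_le strip_in_strips_iff by auto
  qed
  then have "finite K" by (rule finite_subset) simp
  moreover have "l \<in> K" unfolding K_def using E \<open>E \<in> D\<close> by blast
  ultimately have "Max K \<in> K" by (intro Max_in) auto
  then obtain m0 where m0: "strip m0 (Max K) \<in> D" "E \<subseteq> strip m0 (Max K)"
    unfolding K_def by blast
  have "strip m0 (Max K) \<in> Mcal D"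
    unfolding Mcal_def
  proof (intro CollectI conjI notI m0)
    assume "\<exists>E'\<in>D. strip m0 (Max K) \<subset> E'"
    then obtain m' l' where E': "strip m' l' \<in> D" "strip m0 (Max K) \<subset> strip m' l'"
      using D by (blast elim: stripsE)
    moreover have "E \<subseteq> strip m' l'" using m0(2) E'(2) by blast
    ultimately have "l' \<in> K" unfolding K_def by blast
    with \<open>finite K\<close> have "l' \<le> Max K" by simp
    with strip_psubset_imp_less[OF E'(2)] show False by simp
  qed
  with m0 show thesis by (blast intro: that)
qed

lemma Union_Mcal:
  assumes "D \<subseteq> strips L"
  shows "\<Union>(Mcal D) = \<Union>D"
  using Mcal_subset exists_Mcal_superset[OF assms] by blast

lemma Mcal_fst_disjoint:
  assumes D: "D \<subseteq> strips L" and E: "E1 \<in> Mcal D" "E2 \<in> Mcal D" "E1 \<noteq> E2"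
  shows "fst ` E1 \<inter> fst ` E2 = {}"
proof (rule ccontr)
  assume "fst ` E1 \<inter> fst ` E2 \<noteq> {}"
  moreover have "E1 \<in> strips L" "E2 \<in> strips L" using E D Mcal_subset by blast+
  ultimately have "E1 \<subset> E2 \<or> E2 \<subset> E1" using strips_comparable E(3) by blast
  with E show False unfolding Mcal_def by blast
qed

lemma countable_strips: "countable (strips L)"
  by (rule countable_subset[of _ "range (\<lambda>(m, l). strip m l)"]) (auto simp: strips_def)

lemma sets_fst_strips: "E \<in> strips L \<Longrightarrow> fst ` E \<in> sets lborel"
  by (auto elim!: stripsE simp: fst_strip dyadic_interval_def)

lemma sets_fst_Union_strips:
  assumes "D \<subseteq> strips L"
  shows "fst ` \<Union>D \<in> sets lborel"
proof -
  have "fst ` \<Union>D = (\<Union>E\<in>D. fst ` E)" by blast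
  moreover have "countable D" using assms countable_strips countable_subset by blast
  ultimately show ?thesis using assms sets_fst_strips by (auto intro!: sets.countable_UN'')
qed

lemma emeasure_fst_strips: "E \<in> strips L \<Longrightarrow> emeasure lborel (fst ` E) = ennreal (sigma E)"
  by (auto elim!: stripsE simp: fst_strip emeasure_dyadic_interval sigma_strip)

lemma emeasure_fst_Union_le_sum_sigma:
  assumes S: "S \<subseteq> strips L"
  shows "emeasure lborel (fst ` \<Union>S) \<le> sum_sigma S"
proof -
  have "fst ` \<Union>S = (\<Union>E\<in>S. fst ` E)" by blast
  moreover have "countable S" using S countable_strips countable_subset by blast
  ultimately have "emeasure lborel (fst ` \<Union>S) \<le>
      (SUP F\<in>{F. finite F \<and> F \<subseteq> S}. \<Sum>E\<in>F. emeasure lborel (fst ` E))"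
    using S sets_fst_strips by (auto intro!: emeasure_UN_le_SUP)
  also have "\<dots> = sum_sigma S"
    unfolding sum_sigma_def using S emeasure_fst_strips
    by (intro SUP_cong sum.cong) (auto simp: subset_eq)
  finally show ?thesis .
qed

lemma mu_Union_le_sum_sigma: "S \<subseteq> strips L \<Longrightarrow> mu L (\<Union>S) \<le> sum_sigma S"
  unfolding mu_def by (rule INF_lower) blast

lemma Qcal_subset_strips: "Qcal L A \<subseteq> strips L"
  unfolding Qcal_def by blast

lemma Ncal_subset_strips: "Ncal L D \<subseteq> strips L"
  unfolding Ncal_def by blast

lemma Qcal_mono: "A1 \<subseteq> A2 \<Longrightarrow> Qcal L A1 \<subseteq> Qcal L A2"
  unfolding Qcal_def by blast

lemma subset_Ncal:
  assumes "D \<subseteq> strips L"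
  shows "D \<subseteq> Ncal L D"
proof
  fix E assume "E \<in> D"
  then have "fst ` E \<inter> fst ` \<Union>D = fst ` E" by blast
  moreover have "x / 2 \<le> x" for x :: ennreal
    by (rule divide_le_posI_ennreal) (simp_all add: mult_2)
  ultimately show "E \<in> Ncal L D"
    unfolding Ncal_def using \<open>E \<in> D\<close> assms by auto
qed

lemma Ncal_mono:
  assumes "D1 \<subseteq> D2" "D2 \<subseteq> strips L"
  shows "Ncal L D1 \<subseteq> Ncal L D2"
proof
  fix E assume E: "E \<in> Ncal L D1"
  then have "fst ` E \<inter> fst ` \<Union>D2 \<in> sets lborel"
    using sets_fst_strips Ncal_subset_strips sets_fst_Union_strips[OF assms(2)] by blast
  then have "emeasure lborel (fst ` E \<inter> fst ` \<Union>D1) \<le> emeasure lborel (fst ` E \<inter> fst ` \<Union>D2)"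
    using assms(1) by (intro emeasure_mono) auto
  with E show "E \<in> Ncal L D2"
    unfolding Ncal_def by auto
qed

lemma exists_strip_upper_half:
  assumes "p \<in> Y L"
  obtains E where "E \<in> strips L" "p \<in> upper_half E"
proof -
  obtain x s \<xi> where p: "p = (x, s, \<xi>)" by (cases p)
  have s: "0 < s" "s \<le> 2 powr of_int L" using assms unfolding p Y_def by auto
  define l where "l = \<lceil>log 2 s\<rceil>"
  define m where "m = \<lceil>x / 2 powr of_int l\<rceil> - 1"
  have "log 2 s \<le> of_int l" "of_int l - 1 < log 2 s" unfolding l_def by linarith+
  then have "s \<le> 2 powr of_int l" "2 powr of_int l / 2 < s"
    using s by (simp_all add: log_le_iff less_log_iff powr_diff)
  moreover have "x \<in> dyadic_interval m l"
    unfolding mem_dyadic_interval m_def by linarith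
  ultimately have "p \<in> upper_half (strip m l)"
    unfolding upper_half_def mem_strip sigma_strip p using s by simp
  moreover have "log 2 s \<le> of_int L" using s by (simp add: log_le_iff)
  then have "l \<le> L" unfolding l_def by linarith
  ultimately show thesis using strip_in_strips_iff that by blast
qed

lemma subset_Union_Qcal:
  assumes "A \<subseteq> Y L"
  shows "A \<subseteq> \<Union>(Qcal L A)"
proof
  fix p assume "p \<in> A"
  with assms obtain E where "E \<in> strips L" "p \<in> upper_half E"
    by (blast elim: exists_strip_upper_half)
  with \<open>p \<in> A\<close> show "p \<in> \<Union>(Qcal L A)"
    unfolding Qcal_def upper_half_def by blast
qed

lemma upper_half_meets_imp_subset:
  assumes "E \<in> strips L" "E' \<in> strips L'" "p \<in> upper_half E" "p \<in> E'"
  shows "E \<subseteq> E'"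
proof -
  obtain m l m' l' where E: "E = strip m l" "E' = strip m' l'"
    using assms(1,2) by (blast elim: stripsE)
  have "p \<in> E" "2 powr (of_int l - 1) < fst (snd p)"
    using assms(3) unfolding upper_half_def E sigma_strip by (auto simp: powr_diff)
  moreover have "fst (snd p) \<le> 2 powr of_int l'"
    using assms(4) unfolding E mem_strip by simp
  ultimately have "(2::real) powr (of_int l - 1) < 2 powr of_int l'" by linarith
  then have "l \<le> l'" by simp
  with \<open>p \<in> E\<close> assms(4) show ?thesis
    unfolding E mem_strip using strip_subset_strip by blast
qed

lemma Union_Qcal_subset:
  assumes "S \<subseteq> strips L'" "A \<subseteq> \<Union>S"
  shows "\<Union>(Qcal L A) \<subseteq> \<Union>S"
proof
  fix p assume "p \<in> \<Union>(Qcal L A)"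
  then obtain E q where E: "E \<in> strips L" "p \<in> E" "q \<in> upper_half E" "q \<in> A"
    unfolding Qcal_def by blast
  then obtain E' where "E' \<in> S" "q \<in> E'" using assms(2) by blast
  with E assms(1) show "p \<in> \<Union>S" using upper_half_meets_imp_subset by blast
qed

lemma emeasure_fst_Union_Qcal_le_mu:
  "emeasure lborel (fst ` \<Union>(Qcal L A)) \<le> mu L A"
  unfolding mu_def
proof (rule INF_greatest)
  fix S assume S: "S \<in> {S. S \<subseteq> strips L \<and> A \<subseteq> \<Union>S}"
  then have "emeasure lborel (fst ` \<Union>(Qcal L A)) \<le> emeasure lborel (fst ` \<Union>S)"
    using Union_Qcal_subset sets_fst_Union_strips by (intro emeasure_mono image_mono) blast+
  also have "\<dots> \<le> sum_sigma S"
    using S by (intro emeasure_fst_Union_le_sum_sigma) blast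
  finally show "emeasure lborel (fst ` \<Union>(Qcal L A)) \<le> sum_sigma S" .
qed

lemma sum_sigma_Mcal_Ncal_le:
  assumes D: "D \<subseteq> strips L"
  shows "sum_sigma (Mcal (Ncal L D)) \<le> 2 * emeasure lborel (fst ` \<Union>D)"
  unfolding sum_sigma_def
proof (rule SUP_least)
  define U where "U = fst ` \<Union>D"
  have U: "U \<in> sets lborel" unfolding U_def using D by (rule sets_fst_Union_strips)
  fix F assume "F \<in> {F. finite F \<and> F \<subseteq> Mcal (Ncal L D)}"
  then have F: "finite F" "F \<subseteq> Mcal (Ncal L D)" by auto
  then have FN: "F \<subseteq> Ncal L D" using Mcal_subset by blast
  then have Fs: "F \<subseteq> strips L" using Ncal_subset_strips by blast
  have disj: "disjoint_family_on (\<lambda>E. fst ` E \<inter> U) F"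
    using F(2) Mcal_fst_disjoint[OF Ncal_subset_strips] unfolding disjoint_family_on_def by blast
  have "(\<Sum>E\<in>F. ennreal (sigma E)) \<le> (\<Sum>E\<in>F. 2 * emeasure lborel (fst ` E \<inter> U))"
  proof (rule sum_mono)
    fix E assume "E \<in> F"
    then have "emeasure lborel (fst ` E) / 2 \<le> emeasure lborel (fst ` E \<inter> U)"
      using FN unfolding Ncal_def U_def by blast
    then show "ennreal (sigma E) \<le> 2 * emeasure lborel (fst ` E \<inter> U)"
      using emeasure_fst_strips \<open>E \<in> F\<close> Fs by (metis ennreal_le_double_if_half_le subsetD)
  qed
  also have "\<dots> = 2 * (\<Sum>E\<in>F. emeasure lborel (fst ` E \<inter> U))"
    by (simp add: sum_distrib_left)
  also have "(\<Sum>E\<in>F. emeasure lborel (fst ` E \<inter> U)) = emeasure lborel (\<Union>E\<in>F. fst ` E \<inter> U)"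
    using F(1) Fs U sets_fst_strips disj by (intro sum_emeasure) auto
  also have "2 * emeasure lborel (\<Union>E\<in>F. fst ` E \<inter> U) \<le> 2 * emeasure lborel U"
    using U by (intro mult_left_mono emeasure_mono) auto
  finally show "(\<Sum>E\<in>F. ennreal (sigma E)) \<le> 2 * emeasure lborel (fst ` \<Union>D)"
    unfolding U_def .
qed

theorem lemma4p5:
  fixes L :: int and \<Phi> :: real
  assumes "\<Phi> \<ge> 2"
  shows "covering_function L (\<lambda>A. Mcal (Ncal L (Qcal L A))) \<Phi>"
  unfolding covering_function_def
proof (intro conjI allI impI)
  fix A assume "A \<subseteq> Y L"
  let ?M = "Mcal (Ncal L (Qcal L A))"
  have N: "Ncal L (Qcal L A) \<subseteq> strips L" by (rule Ncal_subset_strips)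
  show M: "?M \<subseteq> strips L" using Mcal_subset N by blast
  show "pairwise disjnt ?M"
    using Mcal_fst_disjoint[OF N] unfolding pairwise_def disjnt_def by blast
  show "A \<subseteq> \<Union>?M"
    using subset_Union_Qcal[OF \<open>A \<subseteq> Y L\<close>] subset_Ncal[OF Qcal_subset_strips] Union_Mcal[OF N]
    by blast
  have "mu L (\<Union>?M) \<le> sum_sigma ?M" using M by (rule mu_Union_le_sum_sigma)
  also have "\<dots> \<le> 2 * emeasure lborel (fst ` \<Union>(Qcal L A))"
    using Qcal_subset_strips by (rule sum_sigma_Mcal_Ncal_le)
  also have "\<dots> \<le> 2 * mu L A"
    using emeasure_fst_Union_Qcal_le_mu by (rule mult_left_mono) simp
  also have "\<dots> \<le> ennreal \<Phi> * mu L A"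
    using assms ennreal_leI[of 2 \<Phi>] by (intro mult_right_mono) simp_all
  finally show "mu L (\<Union>?M) \<le> ennreal \<Phi> * mu L A" .
next
  fix A1 A2 assume "A1 \<subseteq> A2" "A2 \<subseteq> Y L"
  then have "Ncal L (Qcal L A1) \<subseteq> Ncal L (Qcal L A2)"
    by (intro Ncal_mono Qcal_mono Qcal_subset_strips)
  then show "\<Union>(Mcal (Ncal L (Qcal L A1))) \<subseteq> \<Union>(Mcal (Ncal L (Qcal L A2)))"
    by (simp add: Union_Mcal[OF Ncal_subset_strips] Union_mono)
qed

end
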